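(* Let $(D, c, \mathcal{B})$ be an instance of 2-Layer General Transshipment with parts $U, W$ (so $A(D) \subseteq U \times W$) and integral capacities $c: A(D) \to \mathbb{N}$. Suppose that for each $v \in V(D)$, either $B_v \subseteq \mathbb{Z}$ or $B_v = [c_v, d_v]$ for some integers $c_v \le d_v$. If $(D, c, \mathcal{B})$ has a $\mathcal{B}$-transshipment, then it has a maximum-value $\mathcal{B}$-transshipment that is integral, i.e., assigns an integer value to every arc.
   Context: A digraph $D$ is 2-layered with parts $U,W$ if $V(D)$ is the disjoint union of $U$ and $W$ and $A(D) \subseteq U \times W$. An instance of 2-Layer General Transshipment consists of a 2-layered digraph $D$ with parts $U,W$, capacities $c: A(D) \to \mathbb{Q}_{\ge 0}$, and sets $\mathcal{B} = \{B_v : v \in V(D)\}$ with $B_v \subseteq \mathbb{Q}_{\ge 0}$ for $v \in U$ and $B_v \subseteq \mathbb{Q}_{\le 0}$ for $v \in W$. For $f: A(D) \to \mathbb{Q}_{\ge 0}$ the excess at $v$ is $f_\Sigma(v) = \sum_{(v,x)\in A(D)} f(v,x) - \sum_{(x,v)\in A(D)} f(x,v)$. A $\mathcal{B}$-transshipment is an $f: A(D) \to \mathbb{Q}_{\ge 0}$ with $f(a) \le c(a)$ for every arc $a$ and $f_\Sigma(v) \in B_v$ for all $v$; its value is $\mathrm{val}(f) = \sum_{u \in U} f_\Sigma(u)$. *)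

theory Defs
  imports Complex_Main
begin

text \<open>A 2-layered digraph with parts U, W: vertex set is the disjoint union of U and W,
  arcs A are a subset of U \<times> W. Arc functions are functions on pairs, only their
  values on A matter.\<close>

definition two_layered :: "'v set \<Rightarrow> 'v set \<Rightarrow> ('v \<times> 'v) set \<Rightarrow> bool" where
  "two_layered U W A \<longleftrightarrow> finite U \<and> finite W \<and> U \<inter> W = {} \<and> A \<subseteq> U \<times> W"

definition gt_instance ::
  "'v set \<Rightarrow> 'v set \<Rightarrow> ('v \<times> 'v) set \<Rightarrow> ('v \<times> 'v \<Rightarrow> rat) \<Rightarrow> ('v \<Rightarrow> rat set) \<Rightarrow> bool" where
  "gt_instance U W A c B \<longleftrightarrow> two_layered U W A
     \<and> (\<forall>a\<in>A. c a \<ge> 0)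
     \<and> (\<forall>v\<in>U. B v \<subseteq> {x. x \<ge> 0})
     \<and> (\<forall>v\<in>W. B v \<subseteq> {x. x \<le> 0})"

definition excess :: "('v \<times> 'v) set \<Rightarrow> ('v \<times> 'v \<Rightarrow> rat) \<Rightarrow> 'v \<Rightarrow> rat" where
  "excess A f v = (\<Sum>a\<in>{a\<in>A. fst a = v}. f a) - (\<Sum>a\<in>{a\<in>A. snd a = v}. f a)"

definition is_transshipment ::
  "'v set \<Rightarrow> 'v set \<Rightarrow> ('v \<times> 'v) set \<Rightarrow> ('v \<times> 'v \<Rightarrow> rat) \<Rightarrow> ('v \<Rightarrow> rat set)
   \<Rightarrow> ('v \<times> 'v \<Rightarrow> rat) \<Rightarrow> bool" where
  "is_transshipment U W A c B f \<longleftrightarrow>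
     (\<forall>a\<in>A. 0 \<le> f a \<and> f a \<le> c a) \<and> (\<forall>v\<in>U \<union> W. excess A f v \<in> B v)"

definition tval :: "'v set \<Rightarrow> ('v \<times> 'v) set \<Rightarrow> ('v \<times> 'v \<Rightarrow> rat) \<Rightarrow> rat" where
  "tval U A f = (\<Sum>u\<in>U. excess A f u)"

end

theory Submission
  imports Defs
begin

text \<open>Replace each \<open>B v\<close> by an integral interval \<open>[l v, u v] \<subseteq> B v\<close> containing the excess of a
  given transshipment \<open>g\<close> (a single point when \<open>B v \<subseteq> \<int>\<close>). While some arc value of \<open>g\<close> is
  fractional, no vertex of integral excess meets exactly one fractional arc, so walking along
  fractional arcs yields a nonzero direction \<open>d\<close>, supported on them, that leaves all integral
  excesses unchanged; orient it so that the value does not decrease. Moving along \<open>d\<close> until the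
  first arc value or excess becomes integral respects all integral bounds and strictly reduces
  the number of fractional arc values and excesses. So every transshipment is dominated by an
  integral one, and as integral transshipments have integral values bounded above, one of them
  is a maximum.\<close>

lemma excess_eq_sum:
  assumes "finite A"
  shows "excess A f v = (\<Sum>a\<in>A. (if fst a = v then f a else 0) - (if snd a = v then f a else 0))"
  using assms by (simp add: excess_def sum.inter_filter sum_subtractf)

lemma excess_add_scaled: "excess A (\<lambda>a. f a + k * d a) v = excess A f v + k * excess A d v"
  by (simp add: excess_def sum.distrib sum_distrib_left algebra_simps)

lemma excess_scaled: "excess A (\<lambda>a. k * d a) v = k * excess A d v"
  using excess_add_scaled[of A "\<lambda>_. 0" k d v] by (simp add: excess_def)

lemma tval_add_scaled: "tval U A (\<lambda>a. f a + k * d a) = tval U A f + k * tval U A d"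
  by (simp add: tval_def excess_add_scaled sum.distrib sum_distrib_left)

lemma tval_scaled: "tval U A (\<lambda>a. k * d a) = k * tval U A d"
  by (simp add: tval_def excess_scaled sum_distrib_left)

lemma excess_eq_on_support:
  assumes "finite A" "F \<subseteq> A" "\<forall>a. a \<notin> F \<longrightarrow> d a = 0"
  shows "excess A d v = excess F d v"
proof -
  have "finite F" using assms(1,2) by (rule finite_subset[rotated])
  then show ?thesis
    unfolding excess_eq_sum[OF assms(1)] excess_eq_sum[OF \<open>finite F\<close>]
    using assms by (intro sum.mono_neutral_right) auto
qed

lemma excess_indicator:
  assumes "finite F" "e \<in> F"
  shows "excess F (\<lambda>a. if a = e then 1 else 0) v =
    (if fst e = v then 1 else 0) - (if snd e = v then 1 else 0)"
  using assms by (simp add: excess_def if_distrib[of "\<lambda>x. x = _"] cong: if_cong)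

lemma sum_excess_eq_0:
  assumes "finite F" "finite S" "fst ` F \<subseteq> S" "snd ` F \<subseteq> S"
  shows "(\<Sum>v\<in>S. excess F d v) = 0"
proof -
  have "(\<Sum>v\<in>S. excess F d v) =
      (\<Sum>a\<in>F. \<Sum>v\<in>S. (if fst a = v then d a else 0) - (if snd a = v then d a else 0))"
    unfolding excess_eq_sum[OF assms(1)] by (rule sum.swap)
  also have "\<dots> = (\<Sum>a\<in>F. d a - d a)"
    using assms by (intro sum.cong) (auto simp: sum_subtractf)
  finally show ?thesis by simp
qed

definition arc_degree :: "('v \<times> 'v) set \<Rightarrow> 'v \<Rightarrow> nat" where
  "arc_degree F v = card {a\<in>F. fst a = v \<or> snd a = v}"

lemma arc_degree_Diff_not_incident:
  "fst e \<noteq> v \<Longrightarrow> snd e \<noteq> v \<Longrightarrow> arc_degree (F - {e}) v = arc_degree F v"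
  unfolding arc_degree_def by (rule arg_cong[where f = card]) auto

lemma exists_balanced_direction_rooted:
  assumes "finite F" "\<forall>a\<in>F. fst a \<noteq> snd a" "e \<in> F" "fst e = x \<or> snd e = x"
    "\<forall>v\<in>I - {x}. arc_degree F v \<noteq> 1"
  shows "\<exists>d. (\<forall>a. a \<notin> F \<longrightarrow> d a = 0) \<and> (\<exists>a\<in>F. d a \<noteq> (0::rat))
           \<and> (\<forall>v\<in>I - {x}. excess F d v = 0)"
  using assms
proof (induction "card F" arbitrary: F I e x rule: less_induct)
  case less
  define y where "y = (if fst e = x then snd e else fst e)"
  define ind where "ind = (\<lambda>a. if a = e then 1 else (0::rat))"
  have y: "y \<noteq> x" "fst e = y \<or> snd e = y" using less.prems(2-4) by (auto simp: y_def)
  have away: "fst e \<noteq> v \<and> snd e \<noteq> v" if "v \<noteq> x" "v \<noteq> y" for v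
    using less.prems(4) that by (auto simp: y_def)
  have excess_ind: "excess F ind v = (if fst e = v then 1 else 0) - (if snd e = v then 1 else 0)" for v
    unfolding ind_def using less.prems(1,3) by (rule excess_indicator)
  have ind_support: "\<forall>a. a \<notin> F \<longrightarrow> ind a = 0" "ind e \<noteq> 0"
    using less.prems(3) by (auto simp: ind_def)
  show ?case
  proof (cases "y \<in> I")
    case False
    have "excess F ind v = 0" if "v \<in> I - {x}" for v
      using that False away[of v] by (auto simp: excess_ind)
    then show ?thesis using ind_support less.prems(3) by blast
  next
    case True
    define F' where "F' = F - {e}"
    have "arc_degree F y \<noteq> 1" using True y(1) less.prems(5) by blast
    then have "{a\<in>F. fst a = y \<or> snd a = y} \<noteq> {e}" unfolding arc_degree_def by auto
    then obtain e' where e': "e' \<in> F'" "fst e' = y \<or> snd e' = y"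
      using y(2) less.prems(3) by (auto simp: F'_def)
    have degree': "\<forall>v\<in>I - {x} - {y}. arc_degree F' v \<noteq> 1"
      using less.prems(5) away by (simp add: F'_def arc_degree_Diff_not_incident)
    have smaller: "card F' < card F"
      unfolding F'_def using less.prems(1,3) by (rule card_Diff1_less)
    have "finite F'" "\<forall>a\<in>F'. fst a \<noteq> snd a"
      using less.prems(1,2) by (auto simp: F'_def)
    then obtain d' where d': "\<forall>a. a \<notin> F' \<longrightarrow> d' a = 0" "\<exists>a\<in>F'. d' a \<noteq> 0"
        "\<forall>v\<in>I - {x} - {y}. excess F' d' v = 0"
      using less.hyps[OF smaller _ _ e' degree'] by blast
    \<comment> \<open>the arc \<open>e\<close> only touches \<open>x\<close> and \<open>y\<close>, so a multiple of it repairs the excess at \<open>y\<close>\<close>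
    define k where "k = - excess F' d' y / excess F ind y"
    define d where "d = (\<lambda>a. d' a + k * ind a)"
    have excess_d: "excess F d v = excess F' d' v + k * excess F ind v" for v
      using excess_eq_on_support[OF less.prems(1) _ d'(1)]
      by (simp add: d_def excess_add_scaled F'_def)
    have "excess F ind y \<noteq> 0" using y less.prems(2,3) by (auto simp: excess_ind)
    then have "excess F d y = 0" by (simp add: excess_d k_def)
    moreover have "excess F d v = 0" if "v \<in> I - {x} - {y}" for v
      using that d'(3) away[of v] by (simp add: excess_d excess_ind)
    ultimately have "\<forall>v\<in>I - {x}. excess F d v = 0" by blast
    moreover have "\<forall>a. a \<notin> F \<longrightarrow> d a = 0" "\<exists>a\<in>F. d a \<noteq> 0"
      using d'(1,2) ind_support by (auto simp: d_def ind_def F'_def)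
    ultimately show ?thesis by blast
  qed
qed

lemma exists_balanced_direction:
  assumes "finite F" "F \<noteq> {}" "\<forall>a\<in>F. fst a \<noteq> snd a" "\<forall>v\<in>I. arc_degree F v \<noteq> 1"
  shows "\<exists>d. (\<forall>a. a \<notin> F \<longrightarrow> d a = 0) \<and> (\<exists>a\<in>F. d a \<noteq> (0::rat)) \<and> (\<forall>v\<in>I. excess F d v = 0)"
proof (cases "\<exists>e\<in>F. fst e \<notin> I \<or> snd e \<notin> I")
  case True
  then obtain e x where "e \<in> F" "fst e = x \<or> snd e = x" "x \<notin> I" by blast
  with exists_balanced_direction_rooted[OF assms(1,3), of e x I] assms(4) show ?thesis by auto
next
  case False
  \<comment> \<open>all endpoints lie in \<open>I\<close>: balance everywhere but at one endpoint \<open>x\<close>;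
    since the excesses sum to zero, \<open>x\<close> is balanced as well\<close>
  then have endpoints_in_I: "\<forall>a\<in>F. fst a \<in> I \<and> snd a \<in> I" by blast
  obtain e where e: "e \<in> F" using assms(2) by blast
  define x where "x = fst e"
  obtain d where d: "\<forall>a. a \<notin> F \<longrightarrow> d a = 0" "\<exists>a\<in>F. d a \<noteq> 0" "\<forall>v\<in>I - {x}. excess F d v = 0"
    using exists_balanced_direction_rooted[OF assms(1,3) e, of x I] assms(4) by (auto simp: x_def)
  define S where "S = fst ` F \<union> snd ` F"
  have "finite S" "x \<in> S" using assms(1) e by (auto simp: S_def x_def)
  have balanced_off_x: "excess F d v = 0" if "v \<noteq> x" for v
  proof (cases "v \<in> I")
    case True
    then show ?thesis using d(3) that by blast
  next
    case False
    then have no_arcs: "{a\<in>F. fst a = v} = {}" "{a\<in>F. snd a = v} = {}"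
      using endpoints_in_I by auto
    show ?thesis unfolding excess_def no_arcs by simp
  qed
  have "0 = (\<Sum>v\<in>S. excess F d v)"
    using sum_excess_eq_0[OF assms(1) \<open>finite S\<close>] by (simp add: S_def)
  also have "\<dots> = excess F d x"
    using \<open>finite S\<close> \<open>x \<in> S\<close> balanced_off_x by (simp add: sum.remove)
  finally have "\<forall>v\<in>I. excess F d v = 0" using balanced_off_x by metis
  then show ?thesis using d(1,2) by blast
qed

lemma arc_degree_fractional_ne_1:
  assumes "finite A" "\<forall>a\<in>A. fst a \<noteq> snd a" "excess A g v \<in> \<int>"
  shows "arc_degree {a\<in>A. g a \<notin> \<int>} v \<noteq> 1"
proof
  assume "arc_degree {a\<in>A. g a \<notin> \<int>} v = 1"
  then obtain a0 where a0: "{a\<in>{a\<in>A. g a \<notin> \<int>}. fst a = v \<or> snd a = v} = {a0}"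
    unfolding arc_degree_def by (meson card_1_singletonE)
  then have "a0 \<in> A" "g a0 \<notin> \<int>" "fst a0 = v \<or> snd a0 = v" by auto
  define h where "h = (\<lambda>a. (if fst a = v then g a else 0) - (if snd a = v then g a else 0))"
  have "h a \<in> \<int>" if "a \<in> A - {a0}" for a
    using that a0 by (cases "fst a = v \<or> snd a = v") (auto simp: h_def)
  then have "sum h (A - {a0}) \<in> \<int>" by (rule Ints_sum)
  moreover have "excess A g v = h a0 + sum h (A - {a0})"
    unfolding excess_eq_sum[OF assms(1)] h_def[symmetric]
    using sum.remove[OF assms(1) \<open>a0 \<in> A\<close>] .
  ultimately have "h a0 \<in> \<int>" using assms(3) by (metis Ints_diff add_diff_cancel_right')
  moreover have "h a0 = g a0 \<or> h a0 = - g a0"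
    using \<open>fst a0 = v \<or> snd a0 = v\<close> assms(2) \<open>a0 \<in> A\<close> by (auto simp: h_def)
  ultimately show False using \<open>g a0 \<notin> \<int>\<close> by (metis Ints_minus minus_minus)
qed

lemma exists_improving_direction:
  assumes "finite A" "\<forall>a\<in>A. fst a \<noteq> snd a" "\<exists>a\<in>A. g a \<notin> \<int>"
  shows "\<exists>d. (\<forall>a. d a \<noteq> 0 \<longrightarrow> a \<in> A \<and> g a \<notin> \<int>) \<and> (\<exists>a. d a \<noteq> 0)
           \<and> (\<forall>v. excess A d v \<noteq> 0 \<longrightarrow> excess A g v \<notin> \<int>) \<and> 0 \<le> tval U A d"
proof -
  define F where "F = {a\<in>A. g a \<notin> \<int>}"
  have "finite F" "F \<noteq> {}" "F \<subseteq> A" using assms(1,3) by (auto simp: F_def)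
  have "\<forall>a\<in>F. fst a \<noteq> snd a" using assms(2) by (auto simp: F_def)
  moreover have "\<forall>v\<in>{v. excess A g v \<in> \<int>}. arc_degree F v \<noteq> 1"
    using arc_degree_fractional_ne_1[OF assms(1,2)] unfolding F_def by blast
  ultimately obtain d where d: "\<forall>a. a \<notin> F \<longrightarrow> d a = 0" "\<exists>a\<in>F. d a \<noteq> 0"
      "\<forall>v\<in>{v. excess A g v \<in> \<int>}. excess F d v = 0"
    using exists_balanced_direction[OF \<open>finite F\<close> \<open>F \<noteq> {}\<close>] by blast
  have "excess A d v = excess F d v" for v
    using excess_eq_on_support[OF assms(1) \<open>F \<subseteq> A\<close> d(1)] .
  then have balanced: "\<forall>v. excess A d v \<noteq> 0 \<longrightarrow> excess A g v \<notin> \<int>" using d(3) by auto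
  define t where "t = (if 0 \<le> tval U A d then 1 else - 1 :: rat)"
  have "\<forall>a. t * d a \<noteq> 0 \<longrightarrow> a \<in> A \<and> g a \<notin> \<int>" "\<exists>a. t * d a \<noteq> 0"
    using d(1,2) by (auto simp: t_def F_def)
  moreover have "\<forall>v. excess A (\<lambda>a. t * d a) v \<noteq> 0 \<longrightarrow> excess A g v \<notin> \<int>"
    using balanced by (simp add: excess_scaled)
  moreover have "0 \<le> tval U A (\<lambda>a. t * d a)" by (simp add: tval_scaled t_def)
  ultimately show ?thesis by (intro exI[of _ "\<lambda>a. t * d a"]) blast
qed

definition time_to_int :: "'a::floor_ceiling \<Rightarrow> 'a \<Rightarrow> 'a" where
  "time_to_int x s = (if s > 0 then of_int \<lceil>x\<rceil> - x else of_int \<lfloor>x\<rfloor> - x) / s"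

lemma time_to_int_pos:
  assumes "x \<notin> \<int>" "s \<noteq> 0"
  shows "time_to_int x s > 0"
proof -
  have "of_int \<lfloor>x\<rfloor> \<noteq> x" "of_int \<lceil>x\<rceil> \<noteq> x" using assms(1) Ints_of_int by metis+
  then have "of_int \<lfloor>x\<rfloor> < x" "x < of_int \<lceil>x\<rceil>"
    using of_int_floor_le[of x] le_of_int_ceiling[of x] by linarith+
  then show ?thesis using assms(2) by (auto simp: time_to_int_def divide_neg_neg)
qed

lemma time_to_int_hits_int:
  assumes "s \<noteq> 0"
  shows "x + time_to_int x s * s \<in> \<int>"
  using assms by (simp add: time_to_int_def)

lemma time_to_int_floor_ceiling:
  assumes "s \<noteq> 0" "0 \<le> e" "e \<le> time_to_int x s"
  shows "of_int \<lfloor>x\<rfloor> \<le> x + e * s \<and> x + e * s \<le> of_int \<lceil>x\<rceil>"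
proof (cases "s > 0")
  case True
  then have "e * s \<le> of_int \<lceil>x\<rceil> - x" using assms(3) by (simp add: time_to_int_def pos_le_divide_eq)
  moreover have "0 \<le> e * s" using True assms(2) by simp
  ultimately show ?thesis using of_int_floor_le[of x] by linarith
next
  case False
  then have "s < 0" using assms(1) by simp
  then have "of_int \<lfloor>x\<rfloor> - x \<le> e * s" using assms(3) by (simp add: time_to_int_def neg_le_divide_eq)
  moreover have "e * s \<le> 0" using \<open>s < 0\<close> assms(2) by (simp add: mult_nonneg_nonpos)
  ultimately show ?thesis using le_of_int_ceiling[of x] by linarith
qed

lemma time_to_int_within_int_bounds:
  assumes "lo \<in> \<int>" "hi \<in> \<int>" "lo \<le> x" "x \<le> hi" "s \<noteq> 0" "0 \<le> e" "e \<le> time_to_int x s"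
  shows "lo \<le> x + e * s \<and> x + e * s \<le> hi"
proof -
  obtain i j where "lo = of_int i" "hi = of_int j" using assms(1,2) Ints_cases by metis
  then have "lo \<le> of_int \<lfloor>x\<rfloor>" "of_int \<lceil>x\<rceil> \<le> hi"
    using assms(3,4) by (simp_all add: le_floor_iff ceiling_le_iff)
  then show ?thesis using time_to_int_floor_ceiling[OF assms(5-7)] by linarith
qed

locale integral_flow_bounds =
  fixes A :: "('v \<times> 'v) set" and c :: "'v \<times> 'v \<Rightarrow> rat"
    and V :: "'v set" and l u :: "'v \<Rightarrow> rat"
  assumes finite_arcs: "finite A" and finite_vertices: "finite V"
    and loopless: "\<forall>a\<in>A. fst a \<noteq> snd a"
    and capacities_int: "\<forall>a\<in>A. c a \<in> \<int>"
    and bounds_int: "\<forall>v\<in>V. l v \<in> \<int> \<and> u v \<in> \<int>"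
begin

definition within_bounds :: "('v \<times> 'v \<Rightarrow> rat) \<Rightarrow> bool" where
  "within_bounds g \<longleftrightarrow> (\<forall>a\<in>A. 0 \<le> g a \<and> g a \<le> c a)
     \<and> (\<forall>v\<in>V. l v \<le> excess A g v \<and> excess A g v \<le> u v)"

definition fractionality :: "('v \<times> 'v \<Rightarrow> rat) \<Rightarrow> nat" where
  "fractionality g = card {a\<in>A. g a \<notin> \<int>} + card {v\<in>V. excess A g v \<notin> \<int>}"

lemma within_bounds_augment:
  assumes "within_bounds g" "0 \<le> e"
    "\<forall>a\<in>A. d a \<noteq> 0 \<longrightarrow> e \<le> time_to_int (g a) (d a)"
    "\<forall>v\<in>V. excess A d v \<noteq> 0 \<longrightarrow> e \<le> time_to_int (excess A g v) (excess A d v)"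
  shows "within_bounds (\<lambda>a. g a + e * d a)"
proof -
  have "0 \<le> g a + e * d a \<and> g a + e * d a \<le> c a" if "a \<in> A" for a
  proof (cases "d a = 0")
    case False
    then show ?thesis using that assms capacities_int
      by (intro time_to_int_within_int_bounds) (auto simp: within_bounds_def)
  qed (use that assms(1) in \<open>simp add: within_bounds_def\<close>)
  moreover have "l v \<le> excess A g v + e * excess A d v \<and> excess A g v + e * excess A d v \<le> u v"
    if "v \<in> V" for v
  proof (cases "excess A d v = 0")
    case False
    then show ?thesis using that assms bounds_int
      by (intro time_to_int_within_int_bounds) (auto simp: within_bounds_def)
  qed (use that assms(1) in \<open>simp add: within_bounds_def\<close>)
  ultimately show ?thesis by (simp add: within_bounds_def excess_add_scaled)
qed

lemma fractionality_augment_less: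
  assumes support: "\<forall>a. d a \<noteq> 0 \<longrightarrow> a \<in> A \<and> g a \<notin> \<int>"
    and balanced: "\<forall>v. excess A d v \<noteq> 0 \<longrightarrow> excess A g v \<notin> \<int>"
    and hit: "(\<exists>a. d a \<noteq> 0 \<and> e = time_to_int (g a) (d a))
      \<or> (\<exists>v\<in>V. excess A d v \<noteq> 0 \<and> e = time_to_int (excess A g v) (excess A d v))"
  shows "fractionality (\<lambda>a. g a + e * d a) < fractionality g"
proof -
  let ?g' = "\<lambda>a. g a + e * d a"
  let ?Fa = "\<lambda>f. {a\<in>A. f a \<notin> \<int>}" and ?Fv = "\<lambda>f. {v\<in>V. excess A f v \<notin> \<int>}"
  have "g a \<notin> \<int>" if "?g' a \<notin> \<int>" for a
    using support[rule_format, of a] that by (cases "d a = 0") auto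
  then have arcs_sub: "?Fa ?g' \<subseteq> ?Fa g" by blast
  have "excess A g v \<notin> \<int>" if "excess A ?g' v \<notin> \<int>" for v
    using balanced[rule_format, of v] that by (cases "excess A d v = 0") (auto simp: excess_add_scaled)
  then have vertices_sub: "?Fv ?g' \<subseteq> ?Fv g" by blast
  have "finite (?Fa g)" "finite (?Fv g)" using finite_arcs finite_vertices by simp_all
  from hit show ?thesis
  proof
    assume "\<exists>a. d a \<noteq> 0 \<and> e = time_to_int (g a) (d a)"
    then obtain a where "d a \<noteq> 0" "e = time_to_int (g a) (d a)" by blast
    then have "a \<in> ?Fa g - ?Fa ?g'"
      using support[rule_format, of a] time_to_int_hits_int[of "d a" "g a"] by auto
    then have "?Fa ?g' \<subset> ?Fa g" using arcs_sub by blast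
    then have "card (?Fa ?g') < card (?Fa g)" using \<open>finite (?Fa g)\<close> by (simp add: psubset_card_mono)
    moreover have "card (?Fv ?g') \<le> card (?Fv g)" using \<open>finite (?Fv g)\<close> vertices_sub by (rule card_mono)
    ultimately show ?thesis by (simp add: fractionality_def)
  next
    assume "\<exists>v\<in>V. excess A d v \<noteq> 0 \<and> e = time_to_int (excess A g v) (excess A d v)"
    then obtain v where "v \<in> V" "excess A d v \<noteq> 0" "e = time_to_int (excess A g v) (excess A d v)"
      by blast
    then have "v \<in> ?Fv g - ?Fv ?g'"
      using balanced time_to_int_hits_int[of "excess A d v" "excess A g v"] by (auto simp: excess_add_scaled)
    then have "?Fv ?g' \<subset> ?Fv g" using vertices_sub by blast
    then have "card (?Fv ?g') < card (?Fv g)" using \<open>finite (?Fv g)\<close> by (simp add: psubset_card_mono)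
    moreover have "card (?Fa ?g') \<le> card (?Fa g)" using \<open>finite (?Fa g)\<close> arcs_sub by (rule card_mono)
    ultimately show ?thesis by (simp add: fractionality_def)
  qed
qed

lemma exists_improving_augmentation:
  assumes "within_bounds g"
    and support: "\<forall>a. d a \<noteq> 0 \<longrightarrow> a \<in> A \<and> g a \<notin> \<int>" and "\<exists>a. d a \<noteq> 0"
    and balanced: "\<forall>v. excess A d v \<noteq> 0 \<longrightarrow> excess A g v \<notin> \<int>"
    and "0 \<le> tval U A d"
  shows "\<exists>g'. within_bounds g' \<and> tval U A g \<le> tval U A g' \<and> fractionality g' < fractionality g"
proof -
  define T where "T = (\<lambda>a. time_to_int (g a) (d a)) ` {a\<in>A. d a \<noteq> 0}
    \<union> (\<lambda>v. time_to_int (excess A g v) (excess A d v)) ` {v\<in>V. excess A d v \<noteq> 0}"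
  define e where "e = Min T"
  have "finite T" "T \<noteq> {}"
    using finite_arcs finite_vertices support \<open>\<exists>a. d a \<noteq> 0\<close> by (auto simp: T_def)
  then have "e \<in> T" and e_le: "\<forall>t\<in>T. e \<le> t" by (simp_all add: e_def)
  have "\<forall>t\<in>T. 0 < t"
    using support balanced by (force simp: T_def intro: time_to_int_pos)
  then have "0 \<le> e" using \<open>e \<in> T\<close> by fastforce
  then have "within_bounds (\<lambda>a. g a + e * d a)"
    using e_le by (intro within_bounds_augment[OF \<open>within_bounds g\<close>]) (auto simp: T_def)
  moreover have "tval U A g \<le> tval U A (\<lambda>a. g a + e * d a)"
    using \<open>0 \<le> e\<close> \<open>0 \<le> tval U A d\<close> by (simp add: tval_add_scaled)
  moreover have "fractionality (\<lambda>a. g a + e * d a) < fractionality g"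
    using \<open>e \<in> T\<close> by (intro fractionality_augment_less[OF support balanced]) (auto simp: T_def)
  ultimately show ?thesis by blast
qed

lemma exists_integral_within_bounds:
  "within_bounds g \<Longrightarrow> \<exists>f. within_bounds f \<and> (\<forall>a\<in>A. f a \<in> \<int>) \<and> tval U A g \<le> tval U A f"
proof (induction "fractionality g" arbitrary: g rule: less_induct)
  case less
  show ?case
  proof (cases "\<forall>a\<in>A. g a \<in> \<int>")
    case True
    then show ?thesis using less.prems by blast
  next
    case False
    then obtain d where "\<forall>a. d a \<noteq> 0 \<longrightarrow> a \<in> A \<and> g a \<notin> \<int>" "\<exists>a. d a \<noteq> 0"
        "\<forall>v. excess A d v \<noteq> 0 \<longrightarrow> excess A g v \<notin> \<int>" "0 \<le> tval U A d"
      using exists_improving_direction[OF finite_arcs loopless] by blast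
    then obtain g' where g': "within_bounds g'" "tval U A g \<le> tval U A g'"
        "fractionality g' < fractionality g"
      using exists_improving_augmentation[OF less.prems] by blast
    then obtain f where "within_bounds f" "\<forall>a\<in>A. f a \<in> \<int>" "tval U A g' \<le> tval U A f"
      using less.hyps by blast
    then show ?thesis using g'(2) by fastforce
  qed
qed

end

lemma ex_max_if_int_valued_bounded:
  fixes h :: "'a \<Rightarrow> 'b::floor_ceiling"
  assumes "P x0" and int_valued: "\<And>x. P x \<Longrightarrow> h x \<in> \<int>" and bounded: "\<And>x. P x \<Longrightarrow> h x \<le> C"
  shows "\<exists>x. P x \<and> (\<forall>y. P y \<longrightarrow> h y \<le> h x)"
proof -
  define S where "S = h ` {x. P x} \<inter> {h x0..}"
  have "S \<subseteq> of_int ` {\<lfloor>h x0\<rfloor>..\<lceil>C\<rceil>}"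
  proof
    fix s assume "s \<in> S"
    then obtain x where "P x" "s = h x" "h x0 \<le> s" by (auto simp: S_def)
    then have "s = of_int \<lfloor>s\<rfloor>" using int_valued by (metis Ints_cases floor_of_int)
    moreover have "\<lfloor>h x0\<rfloor> \<le> \<lfloor>s\<rfloor>" using \<open>h x0 \<le> s\<close> by (rule floor_mono)
    moreover have "\<lfloor>s\<rfloor> \<le> \<lceil>C\<rceil>"
      using bounded[OF \<open>P x\<close>] \<open>s = h x\<close> by (meson floor_mono floor_le_ceiling order_trans)
    ultimately show "s \<in> of_int ` {\<lfloor>h x0\<rfloor>..\<lceil>C\<rceil>}" by auto
  qed
  then have "finite S" by (rule finite_subset) simp
  moreover have "h x0 \<in> S" using \<open>P x0\<close> by (simp add: S_def)
  ultimately have "Max S \<in> S" by (intro Max_in) auto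
  then obtain x where "P x" "h x = Max S" "h x0 \<le> h x" by (auto simp: S_def)
  have "h y \<le> h x" if "P y" for y
    using that \<open>finite S\<close> \<open>h x = Max S\<close> \<open>h x0 \<le> h x\<close> by (cases "h x0 \<le> h y") (auto simp: S_def)
  then show ?thesis using \<open>P x\<close> by blast
qed

lemma two_layered_finite_loopless:
  assumes "two_layered U W A"
  shows "finite A" "\<forall>a\<in>A. fst a \<noteq> snd a"
proof -
  have "finite U" "finite W" "U \<inter> W = {}" "A \<subseteq> U \<times> W"
    using assms by (simp_all add: two_layered_def)
  then show "finite A" by (metis finite_SigmaI finite_subset)
  show "\<forall>a\<in>A. fst a \<noteq> snd a" using \<open>U \<inter> W = {}\<close> \<open>A \<subseteq> U \<times> W\<close> by auto
qed

lemma tval_le_card_mult_sum: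
  assumes "finite A" "\<forall>a\<in>A. 0 \<le> f a \<and> f a \<le> c a"
  shows "tval U A f \<le> of_nat (card U) * (\<Sum>a\<in>A. c a)"
proof -
  have "excess A f v \<le> (\<Sum>a\<in>A. c a)" for v
  proof -
    have "0 \<le> (\<Sum>a\<in>{a\<in>A. snd a = v}. f a)" using assms(2) by (intro sum_nonneg) auto
    then have "excess A f v \<le> (\<Sum>a\<in>{a\<in>A. fst a = v}. f a)" by (simp add: excess_def)
    also have "\<dots> \<le> (\<Sum>a\<in>{a\<in>A. fst a = v}. c a)" using assms(2) by (intro sum_mono) auto
    also have "\<dots> \<le> (\<Sum>a\<in>A. c a)" using assms by (intro sum_mono2) auto
    finally show ?thesis .
  qed
  then show ?thesis unfolding tval_def by (simp add: sum_bounded_above)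
qed

lemma integral_interval_between:
  fixes x :: "'a::linordered_idom"
  assumes "B \<subseteq> \<int> \<or> (\<exists>lo hi. lo \<in> \<int> \<and> hi \<in> \<int> \<and> lo \<le> hi \<and> B = {lo..hi})" "x \<in> B"
  shows "\<exists>lo hi. lo \<in> \<int> \<and> hi \<in> \<int> \<and> x \<in> {lo..hi} \<and> {lo..hi} \<subseteq> B"
  using assms(1)
proof
  assume "B \<subseteq> \<int>"
  then show ?thesis using assms(2) by (intro exI[of _ x]) auto
qed (use assms(2) in blast)

lemma exists_integral_transshipment_ge:
  assumes inst: "gt_instance U W A c B"
    and cap_int: "\<forall>a\<in>A. c a \<in> \<nat>"
    and B_shape: "\<forall>v\<in>U \<union> W. B v \<subseteq> \<int> \<or>
                   (\<exists>cv dv. cv \<in> \<int> \<and> dv \<in> \<int> \<and> cv \<le> dv \<and> B v = {cv..dv})"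
    and g: "is_transshipment U W A c B g"
  shows "\<exists>f. is_transshipment U W A c B f \<and> (\<forall>a\<in>A. f a \<in> \<int>) \<and> tval U A g \<le> tval U A f"
proof -
  have "\<exists>lo hi. lo \<in> \<int> \<and> hi \<in> \<int> \<and> excess A g v \<in> {lo..hi} \<and> {lo..hi} \<subseteq> B v"
    if "v \<in> U \<union> W" for v
    using g that by (intro integral_interval_between[OF B_shape[rule_format, OF that]])
      (simp add: is_transshipment_def)
  then obtain l u where lu: "\<forall>v\<in>U \<union> W. l v \<in> \<int> \<and> u v \<in> \<int>
      \<and> excess A g v \<in> {l v..u v} \<and> {l v..u v} \<subseteq> B v"
    by metis
  have layered: "two_layered U W A" using inst by (simp add: gt_instance_def)
  interpret integral_flow_bounds A c "U \<union> W" l u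
  proof
    show "finite A" "\<forall>a\<in>A. fst a \<noteq> snd a" using two_layered_finite_loopless[OF layered] .
    show "finite (U \<union> W)" using layered by (simp add: two_layered_def)
    show "\<forall>a\<in>A. c a \<in> \<int>" using cap_int Nats_subset_Ints by blast
    show "\<forall>v\<in>U \<union> W. l v \<in> \<int> \<and> u v \<in> \<int>" using lu by blast
  qed
  have "within_bounds g" using g lu by (simp add: within_bounds_def is_transshipment_def)
  then obtain f where f: "within_bounds f" "\<forall>a\<in>A. f a \<in> \<int>" "tval U A g \<le> tval U A f"
    using exists_integral_within_bounds by blast
  have "excess A f v \<in> B v" if "v \<in> U \<union> W" for v
    using f(1) lu that unfolding within_bounds_def by (meson atLeastAtMost_iff subsetD)
  then have "is_transshipment U W A c B f"
    using f(1) by (simp add: within_bounds_def is_transshipment_def)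
  then show ?thesis using f by blast
qed

theorem lemma7:
  fixes U W :: "'v set" and A :: "('v \<times> 'v) set"
    and c :: "'v \<times> 'v \<Rightarrow> rat" and B :: "'v \<Rightarrow> rat set"
  assumes inst: "gt_instance U W A c B"
    and cap_int: "\<forall>a\<in>A. c a \<in> \<nat>"
    and B_shape: "\<forall>v\<in>U \<union> W. B v \<subseteq> \<int> \<or>
                   (\<exists>cv dv. cv \<in> \<int> \<and> dv \<in> \<int> \<and> cv \<le> dv \<and> B v = {cv..dv})"
    and feasible: "\<exists>g. is_transshipment U W A c B g"
  shows "\<exists>f. is_transshipment U W A c B f
            \<and> (\<forall>g. is_transshipment U W A c B g \<longrightarrow> tval U A g \<le> tval U A f)
            \<and> (\<forall>a\<in>A. f a \<in> \<int>)"
proof -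
  let ?integral = "\<lambda>f. is_transshipment U W A c B f \<and> (\<forall>a\<in>A. f a \<in> \<int>)"
  have dominated: "\<exists>f. ?integral f \<and> tval U A g \<le> tval U A f" if "is_transshipment U W A c B g" for g
    using exists_integral_transshipment_ge[OF inst cap_int B_shape that] by blast
  then obtain f0 where "?integral f0" using feasible by blast
  moreover have "tval U A f \<in> \<int>" if "?integral f" for f
    using that unfolding tval_def excess_def by (intro Ints_sum Ints_diff) auto
  moreover have "tval U A f \<le> of_nat (card U) * (\<Sum>a\<in>A. c a)" if "?integral f" for f
    using that two_layered_finite_loopless(1) inst
    by (intro tval_le_card_mult_sum) (auto simp: is_transshipment_def gt_instance_def)
  ultimately obtain f where "?integral f" and f_max: "\<forall>g. ?integral g \<longrightarrow> tval U A g \<le> tval U A f"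
    using ex_max_if_int_valued_bounded[of ?integral f0 "tval U A"] by blast
  moreover have "tval U A g \<le> tval U A f" if "is_transshipment U W A c B g" for g
    using dominated[OF that] f_max by (meson order_trans)
  ultimately show ?thesis by blast
qed

end
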